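(* Let $d\ge3$ and let $C$ be a $d$-dimensional Archimedean copula with generator $\psi$, pseudo-inverse $\varphi$ and Williamson measure $\gamma$. Then $\mu_C(L_t)=\gamma(\{1/\varphi(t)\})$ for every $t\in(0,1]$. If $C$ is strict then $\mu_C(L_0)=0$, and if $C$ is non-strict then $\mu_C(L_0)=\gamma(\{1/\varphi(0)\})$. Finally, the Kendall distribution function satisfies $F_K^d(t)=\gamma([0,1/\varphi(t)])$ for every $t\in(0,1]$.
   Context: An Archimedean generator is a continuous non-increasing $\psi:[0,\infty)\to[0,1]$ with $\psi(0)=1$, $\lim_{z\to\infty}\psi(z)=0$, strictly decreasing on $[0,\inf\{z:\psi(z)=0\}]$, normalized by $\psi(1)=1/2$; pseudo-inverse $\varphi(y)=\inf\{z\in[0,\infty]:\psi(z)=y\}$. $C(\mathbf{u})=\psi(\sum_{i=1}^d\varphi(u_i))$ is a $d$-dimensional Archimedean copula iff $(-1)^{d-2}\psi^{(d-2)}$ exists on $(0,\infty)$ and is non-negative, non-increasing and convex. $C$ is strict if $\varphi(0)=\infty$. The Williamson measure of $\psi$ is the unique probability measure $\gamma$ on $\mathcal{B}([0,\infty))$ with $\gamma(\{0\})=0$ and $\psi(z)=\int_{[0,\infty)}(1-tz)_+^{d-1}\,d\gamma(t)$ for $z>0$. $\mu_C$ is the probability measure on $[0,1]^d$ with distribution function $C$. Level sets: $L_t=\{\mathbf{u}\in[0,1]^d:C(\mathbf{u})=t\}$ for $t\in[0,1]$. The Kendall distribution function is $F_K^d(t)=\mu_C(\{\mathbf{u}:C(\mathbf{u})\le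 t\})$. Convention $1/0=\infty$ (so $F_K^d(1)=\gamma([0,\infty))$). *)

theory Defs
  imports "HOL-Probability.Probability"
begin

text \<open>Extension of a generator to [0,\<infinity>] by psi(\<infinity>) = lim psi = 0.\<close>
definition psi_ext :: "(real \<Rightarrow> real) \<Rightarrow> ereal \<Rightarrow> real" where
  "psi_ext psi z = (if z = \<infinity> then 0 else psi (real_of_ereal z))"

definition pseudo_inv :: "(real \<Rightarrow> real) \<Rightarrow> real \<Rightarrow> ereal" where
  "pseudo_inv psi y = Inf {z :: ereal. 0 \<le> z \<and> psi_ext psi z = y}"

text \<open>Archimedean generator (normalized by psi 1 = 1/2).\<close>
definition archimedean_generator :: "(real \<Rightarrow> real) \<Rightarrow> bool" where
  "archimedean_generator psi \<longleftrightarrow>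
     continuous_on {0..} psi \<and>
     (\<forall>z\<ge>0. 0 \<le> psi z \<and> psi z \<le> 1) \<and>
     (\<forall>x y. 0 \<le> x \<and> x \<le> y \<longrightarrow> psi y \<le> psi x) \<and>
     psi 0 = 1 \<and>
     (psi \<longlongrightarrow> 0) at_top \<and>
     (let z0 = Inf {z :: ereal. 0 \<le> z \<and> z \<noteq> \<infinity> \<and> psi (real_of_ereal z) = 0} in
        \<forall>x y. 0 \<le> x \<and> x < y \<and> ereal y \<le> z0 \<longrightarrow> psi y < psi x) \<and>
     psi 1 = 1 / 2"

definition arch_copula :: "(real \<Rightarrow> real) \<Rightarrow> real ^ 'n::finite \<Rightarrow> real" where
  "arch_copula psi u = psi_ext psi (\<Sum>i\<in>UNIV. pseudo_inv psi (u $ i))"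

definition unit_cube :: "(real ^ 'n::finite) set" where
  "unit_cube = {u. \<forall>i. 0 \<le> u $ i \<and> u $ i \<le> 1}"

definition williamson_measure :: "nat \<Rightarrow> (real \<Rightarrow> real) \<Rightarrow> real measure \<Rightarrow> bool" where
  "williamson_measure d psi \<gamma> \<longleftrightarrow>
     prob_space \<gamma> \<and> sets \<gamma> = sets borel \<and>
     emeasure \<gamma> {..<0} = 0 \<and> emeasure \<gamma> {0} = 0 \<and>
     (\<forall>z>0. psi z = (\<integral>t. (max 0 (1 - t * z)) ^ (d - 1) \<partial>\<gamma>))"

definition copula_measure :: "(real ^ 'n::finite \<Rightarrow> real) \<Rightarrow> (real ^ 'n) measure \<Rightarrow> bool" where
  "copula_measure C \<mu> \<longleftrightarrow>
     prob_space \<mu> \<and> sets \<mu> = sets borel \<and> emeasure \<mu> unit_cube = 1 \<and>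
     (\<forall>u\<in>unit_cube. measure \<mu> {x. \<forall>i. x $ i \<le> u $ i} = C u)"

definition level_set :: "(real ^ 'n::finite \<Rightarrow> real) \<Rightarrow> real \<Rightarrow> (real ^ 'n) set" where
  "level_set C t = {u \<in> unit_cube. C u = t}"

definition kendall_df :: "(real ^ 'n::finite \<Rightarrow> real) \<Rightarrow> (real ^ 'n) measure \<Rightarrow> real \<Rightarrow> real" where
  "kendall_df C \<mu> t = measure \<mu> {u \<in> unit_cube. C u \<le> t}"

end

theory Submission
  imports Defs
begin

text \<open>
  The proof goes through the stochastic representation of McNeil and Neslehova. Let \<open>T\<close> have
  law \<open>\<gamma>\<close> and let \<open>S\<close>, independent of \<open>T\<close>, be uniformly distributed on the unit simplex
  \<open>{s \<ge> 0. \<Sum>i. s i = 1}\<close> of \<open>\<real>\<^sup>d\<close>. The corner \<open>{s \<ge> b}\<close> of the simplex has probability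
  \<open>(max 0 (1 - \<Sum>i. b i)) ^ (d - 1)\<close>, so by the Williamson representation of \<open>psi\<close> the vector
  \<open>U = psi(S / T)\<close> has distribution function \<open>C\<close>, i.e. \<open>\<mu>\<^sub>C\<close> is the law of \<open>U\<close>.
  Moreover \<open>1 / T \<le> phi(0)\<close> almost surely and \<open>phi(psi(s)) = s\<close> for \<open>s \<le> phi(0)\<close>, hence
  \<open>C(U) = psi(\<Sum>i. S i / T) = psi(1 / T)\<close>. Thus \<open>\<mu>\<^sub>C{C \<in> B} = \<gamma>{t. psi(1 / t) \<in> B}\<close>, and the
  masses of the level sets and the Kendall distribution function follow by computing the
  preimages of \<open>{c}\<close> and \<open>[0, c]\<close> under \<open>t \<mapsto> psi(1 / t)\<close> with the Galois connection
  \<open>psi z \<le> c \<longleftrightarrow> phi(c) \<le> z\<close>.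
\<close>

section \<open>Generators and their pseudo-inverses\<close>

context
  fixes psi :: "real \<Rightarrow> real"
  assumes gen: "archimedean_generator psi"
begin

lemma generator_continuous: "continuous_on {0..} psi"
  and generator_nonneg: "0 \<le> z \<Longrightarrow> 0 \<le> psi z"
  and generator_le_1: "0 \<le> z \<Longrightarrow> psi z \<le> 1"
  and generator_antimono: "0 \<le> x \<Longrightarrow> x \<le> y \<Longrightarrow> psi y \<le> psi x"
  and generator_0: "psi 0 = 1"
  and generator_at_top: "(psi \<longlongrightarrow> 0) at_top"
  using gen unfolding archimedean_generator_def by auto

lemma generator_strict_antimono:
  assumes "0 \<le> x" "x < y" "0 < psi y"
  shows "psi y < psi x"
proof -
  define z0 where "z0 = Inf {z :: ereal. 0 \<le> z \<and> z \<noteq> \<infinity> \<and> psi (real_of_ereal z) = 0}"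
  have strict: "\<And>x y. 0 \<le> x \<Longrightarrow> x < y \<Longrightarrow> ereal y \<le> z0 \<Longrightarrow> psi y < psi x"
    using gen unfolding archimedean_generator_def z0_def Let_def by blast
  have "ereal y \<le> z0"
    unfolding z0_def
  proof (rule Inf_greatest, clarify)
    fix z :: ereal
    assume "0 \<le> z" "z \<noteq> \<infinity>" "psi (real_of_ereal z) = 0"
    then obtain r where "z = ereal r" "0 \<le> r" "psi r = 0"
      by (cases z) auto
    then show "ereal y \<le> z"
      using generator_antimono[of r y] assms by force
  qed
  then show ?thesis
    using strict assms by blast
qed

lemma generator_inj:
  assumes "0 \<le> x" "0 \<le> y" "psi x = psi y" "0 < psi x"
  shows "x = y"
  using generator_strict_antimono[of x y] generator_strict_antimono[of y x] assms
  by (cases x y rule: linorder_cases) auto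

lemma generator_surj:
  assumes "0 < c" "c \<le> 1"
  obtains z where "0 \<le> z" "psi z = c"
proof -
  obtain M where M: "\<And>x. x \<ge> M \<Longrightarrow> psi x < c"
    using order_tendstoD(2)[OF generator_at_top \<open>0 < c\<close>]
    by (auto simp: eventually_at_top_linorder)
  have "continuous_on {0..max M 0} psi"
    using generator_continuous by (rule continuous_on_subset) auto
  then obtain z where "0 \<le> z" "psi z = c"
    using IVT2'[of psi "max M 0" c 0] M[of "max M 0"] generator_0 assms by force
  then show ?thesis
    using that by blast
qed

lemma pseudo_inv_nonneg: "0 \<le> pseudo_inv psi c"
  unfolding pseudo_inv_def by (rule Inf_greatest) auto

lemma pseudo_inv_generator_pos:
  assumes "0 \<le> z" "0 < psi z"
  shows "pseudo_inv psi (psi z) = ereal z"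
proof -
  have "{w :: ereal. 0 \<le> w \<and> psi_ext psi w = psi z} = {ereal z}"
  proof (intro set_eqI iffI)
    fix w :: ereal
    assume "w \<in> {w. 0 \<le> w \<and> psi_ext psi w = psi z}"
    then obtain r where "w = ereal r" "0 \<le> r" "psi r = psi z"
      using assms by (cases w) (auto simp: psi_ext_def)
    then show "w \<in> {ereal z}"
      using generator_inj[of r z] assms by simp
  qed (use assms in \<open>auto simp: psi_ext_def\<close>)
  then show ?thesis
    unfolding pseudo_inv_def by simp
qed

lemma generator_zero_threshold:
  assumes "0 \<le> z" "psi z = 0"
  obtains z0 where "0 \<le> z0" "\<And>w. 0 \<le> w \<Longrightarrow> psi w = 0 \<longleftrightarrow> z0 \<le> w"
proof -
  define Z where "Z = {z \<in> {0..}. psi z = 0}"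
  have "closed Z"
    unfolding Z_def by (rule continuous_closed_preimage_constant[OF generator_continuous]) auto
  moreover have "Z \<noteq> {}" "bdd_below Z"
    using assms by (auto simp: Z_def intro: bdd_belowI[of _ 0])
  ultimately have "Inf Z \<in> Z"
    by (rule closed_contains_Inf[rotated -1])
  have "psi w = 0 \<longleftrightarrow> Inf Z \<le> w" if "0 \<le> w" for w
  proof
    show "psi w = 0 \<Longrightarrow> Inf Z \<le> w"
      using \<open>bdd_below Z\<close> that by (auto simp: Z_def intro: cInf_lower)
    show "Inf Z \<le> w \<Longrightarrow> psi w = 0"
      using generator_antimono[of "Inf Z" w] generator_nonneg[of w] \<open>Inf Z \<in> Z\<close> that
      by (auto simp: Z_def)
  qed
  moreover have "0 \<le> Inf Z"
    using \<open>Inf Z \<in> Z\<close> by (simp add: Z_def)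
  ultimately show ?thesis
    using that by blast
qed

lemma generator_eq_0_iff:
  assumes "0 \<le> z"
  shows "psi z = 0 \<longleftrightarrow> pseudo_inv psi 0 \<le> ereal z"
proof (cases "\<exists>z\<ge>0. psi z = 0")
  case True
  then obtain z0 where "0 \<le> z0" and zero_iff: "\<And>w. 0 \<le> w \<Longrightarrow> psi w = 0 \<longleftrightarrow> z0 \<le> w"
    using generator_zero_threshold by blast
  have "pseudo_inv psi 0 = ereal z0"
    unfolding pseudo_inv_def
  proof (rule cInf_eq_minimum)
    show "ereal z0 \<in> {w. 0 \<le> w \<and> psi_ext psi w = 0}"
      using \<open>0 \<le> z0\<close> zero_iff[of z0] by (simp add: psi_ext_def)
    fix w :: ereal
    assume "w \<in> {w. 0 \<le> w \<and> psi_ext psi w = 0}"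
    then show "ereal z0 \<le> w"
      using zero_iff by (cases w) (auto simp: psi_ext_def)
  qed
  then show ?thesis
    using zero_iff assms by simp
next
  case False
  have "{w :: ereal. 0 \<le> w \<and> psi_ext psi w = 0} = {\<infinity>}"
  proof (intro set_eqI iffI)
    fix w :: ereal
    assume "w \<in> {w. 0 \<le> w \<and> psi_ext psi w = 0}"
    then show "w \<in> {\<infinity>}"
      using False by (cases w) (auto simp: psi_ext_def)
  qed (auto simp: psi_ext_def)
  then show ?thesis
    using False assms by (simp add: pseudo_inv_def)
qed

lemma generator_le_iff_pseudo_inv_le:
  assumes "0 \<le> c" "c \<le> 1" "0 \<le> z"
  shows "psi z \<le> c \<longleftrightarrow> pseudo_inv psi c \<le> ereal z"
proof (cases "c = 0")
  case True
  then show ?thesis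
    using generator_eq_0_iff[OF \<open>0 \<le> z\<close>] generator_nonneg[OF \<open>0 \<le> z\<close>] by auto
next
  case False
  then obtain w where w: "0 \<le> w" "psi w = c"
    using generator_surj assms by (metis order_le_less)
  then have "pseudo_inv psi c = ereal w"
    using pseudo_inv_generator_pos False assms by force
  then show ?thesis
    using generator_antimono[of w z] generator_strict_antimono[of z w] w assms False
    by (cases "w \<le> z") auto
qed

lemma pseudo_inv_generator:
  assumes "0 \<le> z" "ereal z \<le> pseudo_inv psi 0"
  shows "pseudo_inv psi (psi z) = ereal z"
proof (cases "0 < psi z")
  case True
  then show ?thesis
    using pseudo_inv_generator_pos assms by blast
next
  case False
  then have "psi z = 0"
    using generator_nonneg[OF \<open>0 \<le> z\<close>] by simp
  then show ?thesis
    using generator_eq_0_iff[OF \<open>0 \<le> z\<close>] assms by simp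
qed

lemma generator_pseudo_inv:
  assumes "0 \<le> c" "c \<le> 1" "pseudo_inv psi c = ereal z"
  shows "psi z = c"
proof (cases "c = 0")
  case True
  then show ?thesis
    using generator_eq_0_iff[of z] pseudo_inv_nonneg[of c] assms by simp
next
  case False
  then obtain w where "0 \<le> w" "psi w = c"
    using generator_surj assms by (metis order_le_less)
  then show ?thesis
    using pseudo_inv_generator_pos[of w] assms False by simp
qed

lemma generator_eq_iff_pseudo_inv_eq:
  assumes "0 \<le> c" "c \<le> 1" "0 \<le> z" "ereal z \<le> pseudo_inv psi 0"
  shows "psi z = c \<longleftrightarrow> pseudo_inv psi c = ereal z"
  using pseudo_inv_generator[of z] generator_pseudo_inv[of c z] assms by auto

lemma pseudo_inv_outside:
  assumes "c < 0 \<or> 1 < c"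
  shows "pseudo_inv psi c = \<infinity>"
proof -
  have no_preimage: "{w :: ereal. 0 \<le> w \<and> psi_ext psi w = c} = {}"
  proof (intro set_eqI iffI)
    fix w :: ereal
    assume "w \<in> {w. 0 \<le> w \<and> psi_ext psi w = c}"
    then obtain r where "0 \<le> r" "psi r = c"
      using assms by (cases w) (auto simp: psi_ext_def)
    then show "w \<in> {}"
      using generator_nonneg[of r] generator_le_1[of r] assms by auto
  qed auto
  show ?thesis
    unfolding pseudo_inv_def no_preimage by (simp add: top_ereal_def)
qed

lemma pseudo_inv_antimono:
  assumes "0 \<le> c" "c \<le> c'" "c' \<le> 1"
  shows "pseudo_inv psi c' \<le> pseudo_inv psi c"
proof (cases "pseudo_inv psi c")
  case (real w)
  have "0 \<le> w"
    using pseudo_inv_nonneg[of c] real by simp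
  then have "psi w \<le> c'"
    using generator_le_iff_pseudo_inv_le[of c w] real assms by simp
  then show ?thesis
    using generator_le_iff_pseudo_inv_le[of c' w] \<open>0 \<le> w\<close> real assms by simp
qed (use pseudo_inv_nonneg[of c] in auto)

lemma borel_measurable_pseudo_inv [measurable]: "pseudo_inv psi \<in> borel_measurable borel"
proof (rule borel_measurableI_less)
  fix a :: ereal
  have "is_interval {c. pseudo_inv psi c < a}"
    unfolding is_interval_1
  proof (clarsimp)
    fix c c' x
    assume "pseudo_inv psi c < a" "pseudo_inv psi c' < a" "c \<le> x" "x \<le> c'"
    moreover have "0 \<le> c" "c' \<le> 1"
      using calculation pseudo_inv_outside[of c] pseudo_inv_outside[of c']
      by (cases "0 \<le> c"; cases "c' \<le> 1"; auto)+
    ultimately show "pseudo_inv psi x < a"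
      using pseudo_inv_antimono[of c x] by auto
  qed
  then show "{c \<in> space borel. pseudo_inv psi c < a} \<in> sets borel"
    by (simp add: real_interval_borel_measurable)
qed

end

text \<open>
  \<open>psi\<close> is only specified on \<open>[0,\<infinity>)\<close>; clamping the argument makes it continuous, hence Borel,
  on all of \<open>\<real>\<close>.
\<close>

definition psi_clamped :: "(real \<Rightarrow> real) \<Rightarrow> real \<Rightarrow> real" where
  "psi_clamped psi x = psi (max 0 x)"

lemma psi_clamped_nonneg_arg [simp]: "0 \<le> x \<Longrightarrow> psi_clamped psi x = psi x"
  by (simp add: psi_clamped_def)

lemma borel_measurable_psi_clamped [measurable]:
  assumes "archimedean_generator psi"
  shows "psi_clamped psi \<in> borel_measurable borel"
proof (rule borel_measurable_continuous_onI)
  show "continuous_on UNIV (psi_clamped psi)"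
    unfolding psi_clamped_def
    by (rule continuous_on_compose2[OF generator_continuous[OF assms]])
      (auto intro!: continuous_intros)
qed

lemma psi_clamped_range:
  assumes "archimedean_generator psi"
  shows "0 \<le> psi_clamped psi x" "psi_clamped psi x \<le> 1"
  using generator_nonneg[OF assms] generator_le_1[OF assms] by (simp_all add: psi_clamped_def)

lemma psi_ext_eq_psi_clamped:
  "0 \<le> z \<Longrightarrow> psi_ext psi z = (if z = \<infinity> then 0 else psi_clamped psi (real_of_ereal z))"
  by (cases z) (auto simp: psi_ext_def)

lemma borel_measurable_arch_copula [measurable]:
  assumes "archimedean_generator psi"
  shows "(arch_copula psi :: real^'n::finite \<Rightarrow> real) \<in> borel_measurable borel"
proof -
  have clamped: "arch_copula psi = (\<lambda>u :: real^'n. let z = \<Sum>i\<in>UNIV. pseudo_inv psi (u $ i) in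
      if z = \<infinity> then 0 else psi_clamped psi (real_of_ereal z))"
    unfolding arch_copula_def Let_def
    by (intro ext psi_ext_eq_psi_clamped sum_nonneg pseudo_inv_nonneg[OF assms])
  show ?thesis
    unfolding clamped Let_def using assms by measurable
qed

section \<open>Volume of corner simplices\<close>

definition corner_simplex :: "'a set \<Rightarrow> ('a \<Rightarrow> real) \<Rightarrow> real \<Rightarrow> ('a \<Rightarrow> real) set" where
  "corner_simplex J b r =
     {y \<in> space (PiM J (\<lambda>_. lborel)). (\<forall>j\<in>J. b j \<le> y j) \<and> (\<Sum>j\<in>J. y j) \<le> r}"

lemma corner_simplex_sets [measurable]:
  "finite J \<Longrightarrow> corner_simplex J b r \<in> sets (PiM J (\<lambda>_. lborel))"
  unfolding corner_simplex_def by measurable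

lemma nn_integral_power_Icc:
  assumes "a \<le> c"
  shows "(\<integral>\<^sup>+ y. ennreal ((c - y) ^ k / fact k) * indicator {a..c} y \<partial>lborel)
           = ennreal ((c - a) ^ Suc k / fact (Suc k))"
proof -
  define F where "F y = - ((c - y) ^ Suc k / fact (Suc k))" for y :: real
  have "(F has_real_derivative (c - y) ^ k / fact k) (at y)" for y
  proof -
    have "((\<lambda>y. (c - y) ^ Suc k) has_real_derivative real (Suc k) * ((0 - 1) * (c - y) ^ k)) (at y)"
      using DERIV_power[where n = "Suc k", OF DERIV_diff[OF DERIV_const DERIV_ident]] by simp
    then have "(F has_real_derivative - (real (Suc k) * ((0 - 1) * (c - y) ^ k) / fact (Suc k))) (at y)"
      unfolding F_def by (intro DERIV_minus DERIV_cdivide)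
    then show ?thesis
      by (simp add: fact_Suc del: of_nat_Suc)
  qed
  then have "(\<integral>\<^sup>+ y. ennreal ((c - y) ^ k / fact k) * indicator {a..c} y \<partial>lborel) = F c - F a"
    using assms by (intro nn_integral_FTC_Icc) auto
  then show ?thesis
    by (simp add: F_def)
qed

lemma emeasure_corner_simplex:
  assumes "finite J"
  shows "emeasure (PiM J (\<lambda>_. lborel)) (corner_simplex J b r) =
    ennreal (if (\<Sum>j\<in>J. b j) \<le> r then (r - (\<Sum>j\<in>J. b j)) ^ card J / fact (card J) else 0)"
  using assms
proof (induction J arbitrary: r rule: finite_induct)
  case empty
  show ?case
    by (simp add: corner_simplex_def PiM_empty)
next
  case (insert i J)
  interpret product_sigma_finite "\<lambda>_. lborel :: real measure"
    by (simp add: product_sigma_finite_def lborel.sigma_finite_measure_axioms)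
  define c where "c = r - (\<Sum>j\<in>J. b j)"
  have slice: "indicator (corner_simplex (insert i J) b r) (x(i := y))
      = (indicator {b i..} y * indicator (corner_simplex J b (r - y)) x :: ennreal)"
    if "x \<in> space (PiM J (\<lambda>_. lborel))" for x y
  proof -
    have "(\<Sum>j\<in>J. (x(i := y)) j) = (\<Sum>j\<in>J. x j)"
      using insert by (intro sum.cong) auto
    moreover have "x(i := y) \<in> space (PiM (insert i J) (\<lambda>_. lborel))"
      using that by (auto simp: space_PiM PiE_def extensional_def)
    ultimately show ?thesis
      using that insert by (auto simp: corner_simplex_def indicator_def)
  qed
  have "emeasure (PiM (insert i J) (\<lambda>_. lborel)) (corner_simplex (insert i J) b r) =
      (\<integral>\<^sup>+ y. \<integral>\<^sup>+ x. indicator (corner_simplex (insert i J) b r) (x(i := y))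
         \<partial>PiM J (\<lambda>_. lborel) \<partial>lborel)"
    using insert by (simp flip: nn_integral_indicator add: product_nn_integral_insert_rev)
  also have "\<dots> = (\<integral>\<^sup>+ y. indicator {b i..} y
      * emeasure (PiM J (\<lambda>_. lborel)) (corner_simplex J b (r - y)) \<partial>lborel)"
    using insert by (simp add: slice nn_integral_cmult_indicator cong: nn_integral_cong)
  also have "\<dots> = (\<integral>\<^sup>+ y. ennreal ((c - y) ^ card J / fact (card J)) * indicator {b i..c} y \<partial>lborel)"
    using insert by (intro nn_integral_cong) (auto simp: indicator_def c_def algebra_simps)
  also have "\<dots> = ennreal (if (\<Sum>j\<in>insert i J. b j) \<le> r
      then (r - (\<Sum>j\<in>insert i J. b j)) ^ card (insert i J) / fact (card (insert i J)) else 0)"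
    using insert nn_integral_power_Icc[of "b i" c "card J"] by (auto simp: c_def algebra_simps)
  finally show ?case .
qed

section \<open>Probability measures on the unit cube\<close>

lemma borel_measurable_vec_lambda [measurable]:
  assumes "\<And>i. g i \<in> borel_measurable M"
  shows "(\<lambda>x. \<chi> i. g i x :: real^'n::finite) \<in> borel_measurable M"
proof (subst borel_measurable_euclidean_space, intro ballI)
  fix b :: "real^'n"
  assume "b \<in> Basis"
  then obtain i where "b = axis i 1"
    by (auto simp: Basis_vec_def)
  then show "(\<lambda>x. (\<chi> i. g i x) \<bullet> b) \<in> borel_measurable M"
    using assms by (simp add: inner_axis)
qed

lemma unit_cube_sets [measurable]: "unit_cube \<in> sets borel"
  unfolding unit_cube_def by measurable

lemma emeasure_Int_unit_cube:
  fixes M :: "(real^'n::finite) measure"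
  assumes "prob_space M" "sets M = sets borel" "emeasure M unit_cube = 1" "A \<in> sets borel"
  shows "emeasure M (A \<inter> unit_cube) = emeasure M A"
proof -
  interpret prob_space M by fact
  have "AE x in M. x \<in> unit_cube"
    using assms by (intro AE_prob_1) (simp add: measure_def)
  then show ?thesis
    using assms by (intro emeasure_eq_AE) auto
qed

lemma emeasure_atMost_unit_cube:
  fixes M :: "(real^'n::finite) measure"
  assumes "prob_space M" "sets M = sets borel" "emeasure M unit_cube = 1"
  shows "emeasure M {..a} =
    (if \<exists>i. a $ i < 0 then 0 else emeasure M {..\<chi> i. min (a $ i) 1})"
proof -
  have "{..a} \<inter> unit_cube =
      (if \<exists>i. a $ i < 0 then {} else {..\<chi> i. min (a $ i) 1} \<inter> unit_cube)"
    by (auto simp: unit_cube_def less_eq_vec_def not_less) (meson dual_order.trans linorder_not_less)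
  then show ?thesis
    using emeasure_Int_unit_cube[OF assms, of "{..a}"]
      emeasure_Int_unit_cube[OF assms, of "{..\<chi> i. min (a $ i) 1}"]
    by (auto split: if_splits)
qed

lemma UN_atMost_of_nat_vec: "(\<Union>k. {..\<chi> _. real k :: real^'n::finite}) = UNIV"
proof (intro set_eqI iffI UNIV_I)
  fix x :: "real^'n"
  obtain k :: nat where "Max (range (\<lambda>i. x $ i)) \<le> real k"
    using real_arch_simple by blast
  then have "x \<le> (\<chi> _. real k)"
    by (auto simp: less_eq_vec_def intro: order.trans[OF Max_ge])
  then show "x \<in> (\<Union>k. {..\<chi> _. real k})"
    by blast
qed

lemma measure_eqI_unit_cube_cdf:
  fixes M N :: "(real^'n::finite) measure"
  assumes M: "prob_space M" "sets M = sets borel" "emeasure M unit_cube = 1"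
    and N: "prob_space N" "sets N = sets borel" "emeasure N unit_cube = 1"
    and cdf: "\<And>u. u \<in> unit_cube \<Longrightarrow> emeasure M {..u} = emeasure N {..u}"
  shows "M = N"
proof (rule measure_eqI_generator_eq[where \<Omega> = UNIV and E = "range atMost"
      and A = "\<lambda>k. {..\<chi> _. real k}"])
  show "Int_stable (range atMost :: (real^'n) set set)"
  proof (rule Int_stableI_image)
    fix a b :: "real^'n"
    have "{..a} \<inter> {..b} = {..inf a b}"
      by auto
    then show "\<exists>c\<in>UNIV. {..a} \<inter> {..b} = {..c}"
      by blast
  qed
  have "sets (borel :: (real^'n) measure) = sigma_sets UNIV (range atMost)"
    by (subst borel_eq_atMost) (simp add: sets_measure_of)
  then show "sets M = sigma_sets UNIV (range atMost)" "sets N = sigma_sets UNIV (range atMost)"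
    using M N by simp_all
  show "emeasure M {..\<chi> _. real k} \<noteq> \<infinity>" for k
    using M(1) by (simp add: prob_space_def finite_measure.emeasure_finite)
  fix X :: "(real^'n) set"
  assume "X \<in> range atMost"
  then obtain a where "X = {..a}"
    by blast
  moreover have "(\<chi> i. min (a $ i) 1) \<in> unit_cube" if "\<not> (\<exists>i. a $ i < 0)"
    using that by (auto simp: unit_cube_def not_less)
  ultimately show "emeasure M X = emeasure N X"
    using emeasure_atMost_unit_cube[OF M, of a] emeasure_atMost_unit_cube[OF N, of a] cdf
    by auto
qed (auto simp: UN_atMost_of_nat_vec)

section \<open>The stochastic representation\<close>

definition williamson_kernel :: "nat \<Rightarrow> real \<Rightarrow> ereal \<Rightarrow> real" where
  "williamson_kernel m t z = (if z = \<infinity> then 0 else (max 0 (1 - t * real_of_ereal z)) ^ m)"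

locale williamson_representation =
  fixes psi :: "real \<Rightarrow> real" and \<gamma> :: "real measure" and i0 :: "'n::finite"
  assumes dim: "2 \<le> CARD('n)"
    and gen: "archimedean_generator psi"
    and will: "williamson_measure CARD('n) psi \<gamma>"
begin

definition J :: "'n set" where
  "J = UNIV - {i0}"

definition m :: nat where
  "m = card J"

definition std_simplex :: "('n \<Rightarrow> real) set" where
  "std_simplex = corner_simplex J (\<lambda>_. 0) 1"

text \<open>
  The uniform distribution on the unit simplex of \<open>\<real>\<^sup>d\<close> is realised through the coordinates
  \<open>J = UNIV - {i0}\<close>: the remaining coordinate of \<open>simplex_point y\<close> is \<open>1 - \<Sum>j\<in>J. y j\<close>.
\<close>

definition uniform_simplex :: "('n \<Rightarrow> real) measure" where
  "uniform_simplex = density (PiM J (\<lambda>_. lborel)) (\<lambda>y. ennreal (fact m) * indicator std_simplex y)"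

definition simplex_point :: "('n \<Rightarrow> real) \<Rightarrow> real^'n" where
  "simplex_point y = (\<chi> i. if i = i0 then 1 - (\<Sum>j\<in>J. y j) else y i)"

definition rep_map :: "real \<times> ('n \<Rightarrow> real) \<Rightarrow> real^'n" where
  "rep_map = (\<lambda>(t, y). \<chi> i. psi_clamped psi (simplex_point y $ i / t))"

definition rep_measure :: "(real^'n) measure" where
  "rep_measure = distr (\<gamma> \<Otimes>\<^sub>M uniform_simplex) borel rep_map"

lemma finite_J [simp]: "finite J"
  by (simp add: J_def)

lemma m_eq: "m = CARD('n) - 1"
  by (simp add: m_def J_def card_Diff_singleton)

lemma m_pos: "1 \<le> m"
  using dim by (simp add: m_eq)

lemma prob_space_williamson: "prob_space \<gamma>"
  and sets_williamson [measurable_cong]: "sets \<gamma> = sets borel"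
  and williamson_integral: "0 < z \<Longrightarrow> psi z = (\<integral>t. (max 0 (1 - t * z)) ^ m \<partial>\<gamma>)"
  using will by (auto simp: williamson_measure_def m_eq)

sublocale W: prob_space \<gamma>
  by (rule prob_space_williamson)

lemma space_williamson [simp]: "space \<gamma> = UNIV"
  using sets_eq_imp_space_eq[OF sets_williamson] by simp

lemma AE_williamson_pos: "AE t in \<gamma>. 0 < t"
proof (rule AE_I')
  have "{..<0} \<in> null_sets \<gamma>" "{0} \<in> null_sets \<gamma>"
    using will by (auto simp: williamson_measure_def sets_williamson intro!: null_setsI)
  then show "{..0 :: real} \<in> null_sets \<gamma>"
    by (metis ivl_disj_un_singleton(2) null_sets.Un)
qed auto

lemma integrable_williamson_power:
  assumes "0 \<le> z"
  shows "integrable \<gamma> (\<lambda>t. (max 0 (1 - t * z)) ^ m)"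
proof (rule W.integrable_const_bound[where B = 1])
  show "AE t in \<gamma>. norm ((max 0 (1 - t * z)) ^ m) \<le> 1"
    using AE_williamson_pos by eventually_elim (use assms in \<open>auto intro: power_le_one\<close>)
qed simp

lemma psi_ext_williamson:
  assumes "0 \<le> z"
  shows "ennreal (psi_ext psi z) = (\<integral>\<^sup>+ t. ennreal (williamson_kernel m t z) \<partial>\<gamma>)"
proof (cases z)
  case (real r)
  show ?thesis
  proof (cases "r = 0")
    case True
    then show ?thesis
      using real generator_0[OF gen] W.emeasure_space_1
      by (simp add: psi_ext_def williamson_kernel_def)
  next
    case False
    then have "0 < r"
      using real assms by simp
    then show ?thesis
      using real williamson_integral[of r] integrable_williamson_power[of r]
      by (simp add: psi_ext_def williamson_kernel_def nn_integral_eq_integral)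
  qed
qed (use assms in \<open>auto simp: psi_ext_def williamson_kernel_def\<close>)

lemma AE_williamson_support:
  assumes "0 < z" "psi z = 0"
  shows "AE t in \<gamma>. 1 \<le> t * z"
proof -
  have "AE t in \<gamma>. (max 0 (1 - t * z)) ^ m = 0"
    using williamson_integral[of z] integrable_williamson_power[of z] assms
    by (subst integral_nonneg_eq_0_iff_AE[symmetric]) auto
  then show ?thesis
    by eventually_elim (use m_pos in simp)
qed

lemma AE_williamson_pseudo_inv_0: "AE t in \<gamma>. 0 < t \<and> ereal (1 / t) \<le> pseudo_inv psi 0"
proof (cases "pseudo_inv psi 0")
  case (real z)
  have "0 \<le> z"
    using pseudo_inv_nonneg[OF gen, of 0] real by simp
  then have "psi z = 0"
    using generator_eq_0_iff[OF gen] real by simp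
  moreover have "z \<noteq> 0"
    using generator_0[OF gen] calculation by auto
  ultimately have "AE t in \<gamma>. 1 \<le> t * z"
    using \<open>0 \<le> z\<close> by (intro AE_williamson_support) auto
  then show ?thesis
    using AE_williamson_pos by eventually_elim (simp add: real divide_le_eq mult.commute)
qed (use AE_williamson_pos pseudo_inv_nonneg[OF gen, of 0] in auto)

lemma sets_uniform_simplex [measurable_cong]:
  "sets uniform_simplex = sets (PiM J (\<lambda>_. lborel))"
  by (simp add: uniform_simplex_def)

lemma space_uniform_simplex: "space uniform_simplex = space (PiM J (\<lambda>_. lborel))"
  by (simp add: uniform_simplex_def)

lemma std_simplex_sets [measurable]: "std_simplex \<in> sets (PiM J (\<lambda>_. lborel))"
  by (simp add: std_simplex_def)

lemma emeasure_uniform_simplex: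
  assumes "A \<in> sets (PiM J (\<lambda>_. lborel))"
  shows "emeasure uniform_simplex A = ennreal (fact m) * emeasure (PiM J (\<lambda>_. lborel)) (std_simplex \<inter> A)"
  unfolding uniform_simplex_def using assms
  by (subst emeasure_density) (auto simp: nn_integral_cmult indicator_inter_arith mult.assoc
      simp flip: nn_integral_indicator)

sublocale S: prob_space uniform_simplex
proof
  have "emeasure (PiM J (\<lambda>_. lborel)) std_simplex = ennreal (1 / fact m)"
    by (simp add: std_simplex_def emeasure_corner_simplex m_def)
  then show "emeasure uniform_simplex (space uniform_simplex) = 1"
    using sets.sets_into_space[OF std_simplex_sets]
    by (simp add: emeasure_uniform_simplex space_uniform_simplex Int_absorb2 flip: ennreal_mult)
qed

lemma AE_uniform_simplex: "AE y in uniform_simplex. y \<in> std_simplex"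
  unfolding uniform_simplex_def by (subst AE_density) (auto simp: indicator_def)

lemma sum_simplex_point: "(\<Sum>i\<in>UNIV. simplex_point y $ i) = 1"
proof -
  have "(\<Sum>i\<in>UNIV. simplex_point y $ i) = simplex_point y $ i0 + (\<Sum>i\<in>J. simplex_point y $ i)"
    unfolding J_def by (simp add: sum.remove)
  also have "(\<Sum>i\<in>J. simplex_point y $ i) = (\<Sum>j\<in>J. y j)"
    by (rule sum.cong) (auto simp: simplex_point_def J_def)
  finally show ?thesis
    by (simp add: simplex_point_def)
qed

lemma simplex_point_nonneg:
  assumes "y \<in> std_simplex"
  shows "0 \<le> simplex_point y $ i"
  using assms by (auto simp: simplex_point_def J_def std_simplex_def corner_simplex_def)

lemma simplex_point_le_1:
  assumes "y \<in> std_simplex"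
  shows "simplex_point y $ i \<le> 1"
  using member_le_sum[of i UNIV "\<lambda>i. simplex_point y $ i"] simplex_point_nonneg[OF assms]
  by (simp add: sum_simplex_point)

lemma borel_measurable_simplex_point [measurable]:
  "(\<lambda>y. simplex_point y $ i) \<in> borel_measurable (PiM J (\<lambda>_. lborel))"
  by (cases "i = i0") (auto simp: simplex_point_def J_def)

lemma borel_measurable_rep_map [measurable]: "rep_map \<in> borel_measurable (\<gamma> \<Otimes>\<^sub>M uniform_simplex)"
proof -
  have "(\<lambda>x. psi_clamped psi (simplex_point (snd x) $ i / fst x))
      \<in> borel_measurable (\<gamma> \<Otimes>\<^sub>M uniform_simplex)" for i
    using gen by measurable
  then show ?thesis
    unfolding rep_map_def by (simp add: case_prod_beta')
qed

lemma rep_map_in_unit_cube: "rep_map x \<in> unit_cube"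
  using psi_clamped_range[OF gen] by (auto simp: rep_map_def unit_cube_def case_prod_beta')

lemma prob_space_williamson_uniform_simplex: "prob_space (\<gamma> \<Otimes>\<^sub>M uniform_simplex)"
  by (rule prob_space_pair) unfold_locales

lemma prob_space_rep_measure: "prob_space rep_measure"
  unfolding rep_measure_def
  by (rule prob_space.prob_space_distr[OF prob_space_williamson_uniform_simplex borel_measurable_rep_map])

lemma sets_rep_measure: "sets rep_measure = sets borel"
  by (simp add: rep_measure_def)

lemma rep_measure_unit_cube: "emeasure rep_measure unit_cube = 1"
proof -
  have "rep_map -` unit_cube \<inter> space (\<gamma> \<Otimes>\<^sub>M uniform_simplex) = space (\<gamma> \<Otimes>\<^sub>M uniform_simplex)"
    using rep_map_in_unit_cube by auto
  then show ?thesis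
    using prob_space.emeasure_space_1[OF prob_space_williamson_uniform_simplex]
    by (simp add: rep_measure_def emeasure_distr)
qed

lemma emeasure_rep_measure:
  assumes "X \<in> sets borel"
  shows "emeasure rep_measure X
    = (\<integral>\<^sup>+ t. emeasure uniform_simplex {y \<in> space uniform_simplex. rep_map (t, y) \<in> X} \<partial>\<gamma>)"
proof -
  have "emeasure rep_measure X
      = emeasure (\<gamma> \<Otimes>\<^sub>M uniform_simplex) (rep_map -` X \<inter> space (\<gamma> \<Otimes>\<^sub>M uniform_simplex))"
    unfolding rep_measure_def using assms by (simp add: emeasure_distr)
  also have "\<dots> = (\<integral>\<^sup>+ t. emeasure uniform_simplex
      (Pair t -` (rep_map -` X \<inter> space (\<gamma> \<Otimes>\<^sub>M uniform_simplex))) \<partial>\<gamma>)"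
    using assms by (subst S.emeasure_pair_measure_alt) auto
  also have "\<dots> = (\<integral>\<^sup>+ t. emeasure uniform_simplex {y \<in> space uniform_simplex. rep_map (t, y) \<in> X} \<partial>\<gamma>)"
    by (intro nn_integral_cong arg_cong[where f = "emeasure uniform_simplex"])
      (auto simp: space_pair_measure)
  finally show ?thesis .
qed

lemma rep_map_le_iff:
  assumes "0 < t" "y \<in> std_simplex" "0 \<le> c" "c \<le> 1"
  shows "rep_map (t, y) $ i \<le> c \<longleftrightarrow> pseudo_inv psi c \<le> ereal (simplex_point y $ i / t)"
proof -
  have "0 \<le> simplex_point y $ i / t"
    using simplex_point_nonneg[OF assms(2)] assms(1) by simp
  then show ?thesis
    using generator_le_iff_pseudo_inv_le[OF gen assms(3,4)] by (simp add: rep_map_def)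
qed

lemma emeasure_uniform_simplex_corner:
  assumes "\<And>i. 0 \<le> b i"
  shows "emeasure uniform_simplex (corner_simplex J b (1 - b i0))
    = ennreal ((max 0 (1 - (\<Sum>i\<in>UNIV. b i))) ^ m)"
proof -
  have "corner_simplex J b (1 - b i0) \<subseteq> std_simplex"
    using assms by (auto simp: corner_simplex_def std_simplex_def intro: order.trans)
  then have "emeasure uniform_simplex (corner_simplex J b (1 - b i0))
      = ennreal (fact m) * emeasure (PiM J (\<lambda>_. lborel)) (corner_simplex J b (1 - b i0))"
    by (simp add: emeasure_uniform_simplex Int_absorb1)
  moreover have "(\<Sum>i\<in>UNIV. b i) = b i0 + (\<Sum>j\<in>J. b j)"
    unfolding J_def by (simp add: sum.remove)
  ultimately show ?thesis
    using m_pos by (auto simp: emeasure_corner_simplex m_def max_def diff_diff_eq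
        simp flip: ennreal_mult)
qed

lemma rep_map_le_iff_corner_simplex:
  assumes "0 < t" "y \<in> std_simplex" "u \<in> unit_cube" "\<And>i. pseudo_inv psi (u $ i) = ereal (r i)"
  shows "rep_map (t, y) \<le> u \<longleftrightarrow> y \<in> corner_simplex J (\<lambda>i. t * r i) (1 - t * r i0)"
proof -
  have "rep_map (t, y) \<le> u \<longleftrightarrow> (\<forall>i. t * r i \<le> simplex_point y $ i)"
    using rep_map_le_iff[OF assms(1,2)] assms(1,3,4)
    by (simp add: less_eq_vec_def unit_cube_def pos_le_divide_eq mult.commute)
  also have "\<dots> \<longleftrightarrow> (\<forall>j\<in>J. t * r j \<le> y j) \<and> t * r i0 \<le> 1 - (\<Sum>j\<in>J. y j)"
    by (auto simp: simplex_point_def J_def)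
  finally show ?thesis
    using assms(2) by (auto simp: corner_simplex_def std_simplex_def)
qed

lemma emeasure_uniform_simplex_rep_map_atMost:
  assumes "0 < t" "u \<in> unit_cube"
  shows "emeasure uniform_simplex {y \<in> space uniform_simplex. rep_map (t, y) \<le> u}
    = ennreal (williamson_kernel m t (\<Sum>i\<in>UNIV. pseudo_inv psi (u $ i)))"
proof (cases "\<exists>i. pseudo_inv psi (u $ i) = \<infinity>")
  case True
  then obtain i where i: "pseudo_inv psi (u $ i) = \<infinity>"
    by blast
  have "AE y in uniform_simplex. y \<in> {y \<in> space uniform_simplex. rep_map (t, y) \<le> u} \<longleftrightarrow> y \<in> {}"
    using AE_uniform_simplex
  proof eventually_elim
    case (elim y)
    then show ?case
      using rep_map_le_iff[OF assms(1) elim, of "u $ i" i] i assms(2)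
      by (auto simp: less_eq_vec_def unit_cube_def)
  qed
  then have "emeasure uniform_simplex {y \<in> space uniform_simplex. rep_map (t, y) \<le> u} = 0"
    by (subst emeasure_eq_AE[where B = "{}"]) auto
  then show ?thesis
    using True by (simp add: williamson_kernel_def sum_Pinfty)
next
  case False
  define r where "r i = real_of_ereal (pseudo_inv psi (u $ i))" for i
  have r: "pseudo_inv psi (u $ i) = ereal (r i)" "0 \<le> r i" for i
    using False pseudo_inv_nonneg[OF gen, of "u $ i"] unfolding r_def
    by (cases "pseudo_inv psi (u $ i)"; simp)+
  have "AE y in uniform_simplex. y \<in> {y \<in> space uniform_simplex. rep_map (t, y) \<le> u}
      \<longleftrightarrow> y \<in> corner_simplex J (\<lambda>i. t * r i) (1 - t * r i0)"
    using AE_uniform_simplex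
    by eventually_elim
      (use rep_map_le_iff_corner_simplex[OF assms(1) _ assms(2) r(1)] in \<open>auto simp: space_uniform_simplex corner_simplex_def\<close>)
  then have "emeasure uniform_simplex {y \<in> space uniform_simplex. rep_map (t, y) \<le> u}
      = emeasure uniform_simplex (corner_simplex J (\<lambda>i. t * r i) (1 - t * r i0))"
    by (intro emeasure_eq_AE) auto
  also have "\<dots> = ennreal ((max 0 (1 - t * (\<Sum>i\<in>UNIV. r i))) ^ m)"
    using r assms(1) by (subst emeasure_uniform_simplex_corner) (auto simp: sum_distrib_left)
  finally show ?thesis
    using False by (simp add: williamson_kernel_def r sum_ereal)
qed

lemma emeasure_rep_measure_atMost:
  assumes "u \<in> unit_cube"
  shows "emeasure rep_measure {..u} = ennreal (arch_copula psi u)"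
proof -
  have "emeasure rep_measure {..u}
      = (\<integral>\<^sup>+ t. emeasure uniform_simplex {y \<in> space uniform_simplex. rep_map (t, y) \<le> u} \<partial>\<gamma>)"
    by (simp add: emeasure_rep_measure)
  also have "\<dots> = (\<integral>\<^sup>+ t. ennreal (williamson_kernel m t (\<Sum>i\<in>UNIV. pseudo_inv psi (u $ i))) \<partial>\<gamma>)"
    using AE_williamson_pos
    by (intro nn_integral_cong_AE) (auto elim!: eventually_mono
        simp: emeasure_uniform_simplex_rep_map_atMost[OF _ assms])
  also have "\<dots> = ennreal (arch_copula psi u)"
    unfolding arch_copula_def
    by (rule psi_ext_williamson[symmetric]) (simp add: sum_nonneg pseudo_inv_nonneg[OF gen])
  finally show ?thesis .
qed

lemma rep_measure_eq:
  assumes "copula_measure (arch_copula psi) \<mu>"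
  shows "rep_measure = \<mu>"
proof (rule measure_eqI_unit_cube_cdf[OF prob_space_rep_measure sets_rep_measure rep_measure_unit_cube])
  show \<mu>: "prob_space \<mu>" "sets \<mu> = sets borel" "emeasure \<mu> unit_cube = 1"
    using assms by (auto simp: copula_measure_def)
  fix u :: "real^'n"
  assume "u \<in> unit_cube"
  moreover have "{x. \<forall>i. x $ i \<le> u $ i} = {..u}"
    by (auto simp: less_eq_vec_def)
  ultimately have "measure \<mu> {..u} = arch_copula psi u"
    using assms by (auto simp: copula_measure_def)
  then show "emeasure rep_measure {..u} = emeasure \<mu> {..u}"
    using emeasure_rep_measure_atMost[OF \<open>u \<in> unit_cube\<close>] \<mu>(1)
    by (simp add: prob_space_def finite_measure.emeasure_eq_measure)
qed

lemma arch_copula_rep_map: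
  assumes "0 < t" "ereal (1 / t) \<le> pseudo_inv psi 0" "y \<in> std_simplex"
  shows "arch_copula psi (rep_map (t, y)) = psi (1 / t)"
proof -
  have "pseudo_inv psi (rep_map (t, y) $ i) = ereal (simplex_point y $ i / t)" for i
  proof -
    have "0 \<le> simplex_point y $ i / t" "simplex_point y $ i / t \<le> 1 / t"
      using simplex_point_nonneg[OF assms(3)] simplex_point_le_1[OF assms(3)] assms(1)
      by (simp_all add: divide_right_mono)
    then show ?thesis
      using pseudo_inv_generator[OF gen, of "simplex_point y $ i / t"] assms(2)
      by (simp add: rep_map_def order_trans[of _ "ereal (1 / t)"])
  qed
  then have "(\<Sum>i\<in>UNIV. pseudo_inv psi (rep_map (t, y) $ i)) = ereal (1 / t)"
    by (simp add: sum_divide_distrib[symmetric] sum_simplex_point)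
  then show ?thesis
    by (simp add: arch_copula_def psi_ext_def)
qed

lemma emeasure_uniform_simplex_rep_map_vimage:
  assumes "B \<in> sets borel" "0 < t" "ereal (1 / t) \<le> pseudo_inv psi 0"
  shows "emeasure uniform_simplex
      {y \<in> space uniform_simplex. rep_map (t, y) \<in> {u \<in> unit_cube. arch_copula psi u \<in> B}}
    = indicator B (psi (1 / t))"
proof -
  have "{y \<in> space uniform_simplex. rep_map (t, y) \<in> {u \<in> unit_cube. arch_copula psi u \<in> B}}
      \<in> sets uniform_simplex"
    using assms(1) gen by measurable
  moreover have "AE y in uniform_simplex.
      y \<in> {y \<in> space uniform_simplex. rep_map (t, y) \<in> {u \<in> unit_cube. arch_copula psi u \<in> B}}
      \<longleftrightarrow> y \<in> (if psi (1 / t) \<in> B then space uniform_simplex else {})"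
    using AE_uniform_simplex
  proof eventually_elim
    case (elim y)
    then have "y \<in> space uniform_simplex"
      using sets.sets_into_space[OF std_simplex_sets] space_uniform_simplex by auto
    then show ?case
      using arch_copula_rep_map[OF assms(2,3) elim] rep_map_in_unit_cube by auto
  qed
  ultimately have "emeasure uniform_simplex
      {y \<in> space uniform_simplex. rep_map (t, y) \<in> {u \<in> unit_cube. arch_copula psi u \<in> B}}
    = emeasure uniform_simplex (if psi (1 / t) \<in> B then space uniform_simplex else {})"
    by (intro emeasure_eq_AE) auto
  then show ?thesis
    by (simp add: S.emeasure_space_1)
qed

lemma emeasure_rep_measure_arch_copula_vimage:
  assumes "B \<in> sets borel"
  shows "emeasure rep_measure {u \<in> unit_cube. arch_copula psi u \<in> B}
    = emeasure \<gamma> {t. psi_clamped psi (1 / t) \<in> B}"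
proof -
  have L: "{u \<in> unit_cube. arch_copula psi u \<in> B} \<in> sets borel"
    and T: "{t. psi_clamped psi (1 / t) \<in> B} \<in> sets \<gamma>"
    using assms gen by measurable
  have "AE t in \<gamma>. emeasure uniform_simplex
      {y \<in> space uniform_simplex. rep_map (t, y) \<in> {u \<in> unit_cube. arch_copula psi u \<in> B}}
    = indicator {t. psi_clamped psi (1 / t) \<in> B} t"
    using AE_williamson_pseudo_inv_0
  proof eventually_elim
    case (elim t)
    then show ?case
      using emeasure_uniform_simplex_rep_map_vimage[OF assms, of t] by (simp add: indicator_def)
  qed
  then have "emeasure rep_measure {u \<in> unit_cube. arch_copula psi u \<in> B}
      = (\<integral>\<^sup>+ t. indicator {t. psi_clamped psi (1 / t) \<in> B} t \<partial>\<gamma>)"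
    unfolding emeasure_rep_measure[OF L] by (rule nn_integral_cong_AE)
  then show ?thesis
    using T by simp
qed

end

section \<open>Level sets and the Kendall distribution function\<close>

lemma ereal_eq_inverse_iff:
  fixes z :: ereal
  assumes "0 < t" "0 \<le> z"
  shows "z = ereal (1 / t) \<longleftrightarrow> ereal t = 1 / z"
proof (cases z)
  case (real r)
  then show ?thesis
    using assms by (cases "r = 0") (auto simp: divide_ereal_def inverse_eq_divide field_simps)
qed (use assms in auto)

lemma ereal_le_inverse_iff:
  fixes z :: ereal
  assumes "0 < t" "0 \<le> z"
  shows "z \<le> ereal (1 / t) \<longleftrightarrow> ereal t \<le> 1 / z"
proof (cases z)
  case (real r)
  then show ?thesis
    using assms by (cases "r = 0") (auto simp: divide_ereal_def inverse_eq_divide field_simps)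
qed (use assms in auto)

context williamson_representation
begin

lemma measure_arch_copula_vimage:
  fixes \<mu> :: "(real^'n) measure"
  assumes "copula_measure (arch_copula psi) \<mu>" "B \<in> sets borel"
  shows "measure \<mu> {u \<in> unit_cube. arch_copula psi u \<in> B} = measure \<gamma> {t. psi_clamped psi (1 / t) \<in> B}"
  using emeasure_rep_measure_arch_copula_vimage[OF assms(2)] rep_measure_eq[OF assms(1)]
  by (simp add: measure_def)

lemma measure_level_set_arch_copula:
  fixes \<mu> :: "(real^'n) measure"
  assumes "copula_measure (arch_copula psi) \<mu>" "0 \<le> c" "c \<le> 1"
  shows "measure \<mu> (level_set (arch_copula psi) c) = measure \<gamma> {x. ereal x = 1 / pseudo_inv psi c}"
proof -
  have "measure \<mu> (level_set (arch_copula psi) c) = measure \<gamma> {t. psi_clamped psi (1 / t) \<in> {c}}"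
    using measure_arch_copula_vimage[OF assms(1), of "{c}"] by (simp add: level_set_def)
  also have "\<dots> = measure \<gamma> {x. ereal x = 1 / pseudo_inv psi c}"
  proof (rule measure_eq_AE)
    show "AE t in \<gamma>. t \<in> {t. psi_clamped psi (1 / t) \<in> {c}} \<longleftrightarrow> t \<in> {x. ereal x = 1 / pseudo_inv psi c}"
      using AE_williamson_pseudo_inv_0
    proof eventually_elim
      case (elim t)
      then show ?case
        using generator_eq_iff_pseudo_inv_eq[OF gen assms(2,3), of "1 / t"]
          ereal_eq_inverse_iff[OF _ pseudo_inv_nonneg[OF gen]]
        by auto
    qed
    show "{t. psi_clamped psi (1 / t) \<in> {c}} \<in> sets \<gamma>"
      using gen by measurable
  qed simp
  finally show ?thesis .
qed

lemma kendall_df_arch_copula: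
  fixes \<mu> :: "(real^'n) measure"
  assumes "copula_measure (arch_copula psi) \<mu>" "0 < c" "c \<le> 1"
  shows "kendall_df (arch_copula psi) \<mu> c
    = measure \<gamma> {x. 0 \<le> x \<and> ereal x \<le> 1 / pseudo_inv psi c}"
proof -
  have "kendall_df (arch_copula psi) \<mu> c = measure \<gamma> {t. psi_clamped psi (1 / t) \<in> {..c}}"
    using measure_arch_copula_vimage[OF assms(1), of "{..c}"] by (simp add: kendall_df_def)
  also have "\<dots> = measure \<gamma> {x. 0 \<le> x \<and> ereal x \<le> 1 / pseudo_inv psi c}"
  proof (rule measure_eq_AE)
    show "AE t in \<gamma>. t \<in> {t. psi_clamped psi (1 / t) \<in> {..c}}
        \<longleftrightarrow> t \<in> {x. 0 \<le> x \<and> ereal x \<le> 1 / pseudo_inv psi c}"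
      using AE_williamson_pos
    proof eventually_elim
      case (elim t)
      then show ?case
        using generator_le_iff_pseudo_inv_le[OF gen _ assms(3), of "1 / t"] assms(2)
          ereal_le_inverse_iff[OF _ pseudo_inv_nonneg[OF gen]]
        by auto
    qed
    show "{t. psi_clamped psi (1 / t) \<in> {..c}} \<in> sets \<gamma>"
      using gen by measurable
  qed simp
  finally show ?thesis .
qed

end

theorem theorem5p5:
  fixes psi :: "real \<Rightarrow> real" and \<gamma> :: "real measure" and \<mu> :: "(real ^ 'n::finite) measure"
  assumes d3: "CARD('n) \<ge> 3"
    and gen: "archimedean_generator psi"
    and will: "williamson_measure CARD('n) psi \<gamma>"
    and mu: "copula_measure (arch_copula psi) \<mu>"
  shows "(\<forall>t\<in>{0<..1}. measure \<mu> (level_set (arch_copula psi) t)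
             = measure \<gamma> {x. ereal x = 1 / pseudo_inv psi t})
     \<and> (pseudo_inv psi 0 = \<infinity> \<longrightarrow> measure \<mu> (level_set (arch_copula psi) 0) = 0)
     \<and> (pseudo_inv psi 0 \<noteq> \<infinity> \<longrightarrow> measure \<mu> (level_set (arch_copula psi) 0)
             = measure \<gamma> {x. ereal x = 1 / pseudo_inv psi 0})
     \<and> (\<forall>t\<in>{0<..1}. kendall_df (arch_copula psi) \<mu> t
             = measure \<gamma> {x. 0 \<le> x \<and> ereal x \<le> 1 / pseudo_inv psi t})"
proof -
  interpret williamson_representation psi \<gamma> "undefined :: 'n"
    using d3 gen will by unfold_locales auto
  have "measure \<gamma> {0} = 0"
    using will by (simp add: williamson_measure_def measure_def)
  then show ?thesis
    using measure_level_set_arch_copula[OF mu] kendall_df_arch_copula[OF mu] by simp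
qed

end
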